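(* Let $p>1$, let $[X,\mathcal B,m^i,\nu_i]$ ($i=1,2$) be reversible random walk spaces on the same measurable space with $\nu_2\ll\nu_1$, $\mu=\frac{d\nu_2}{d\nu_1}\in L^\infty(X,\nu_1)$, $\mu\ge c>0$ $\nu_1$-a.e., and assume $\nu_1(X)<\infty$. Let $u_0\in L^2(X,\nu_1)$ and let $u$ be the strong solution of $u_t-\Delta_1^{m^1}u-\mu\Delta_p^{m^2}u\ni0$, $u(0)=u_0$. Then $$\int_X u(t)\,d\nu_1=\int_X u_0\,d\nu_1\quad\text{for all }t\ge0.$$
   Context: Random walk space $[X,\mathcal B,m,\nu]$: measurable space with countably generated $\sigma$-algebra, probability measures $m_x$ depending measurably on $x$, $\sigma$-finite invariant measure $\nu$ ($\nu(A)=\int m_x(A)\,d\nu(x)$), reversible if $dm_x(y)d\nu(x)=dm_y(x)d\nu(y)$. $\nabla u(x,y)=u(y)-u(x)$. $H=L^2(X,\nu_1)$. $(u,v)\in\Delta_1^{m}$ iff $(u,-v)\in\partial_{L^2(X,\nu)}\mathcal F_{1,m}(u)$ with $\mathcal F_{1,m}(u)=\frac12\int_{X\times X}|\nabla u|\,dm_x(y)d\nu(x)$ ($+\infty$ if infinite), $\partial$ the convex subdifferential. For $p>1$, $(u,w)\in\Delta_p^{m}$ iff $u,w\in L^2(X,\nu)$, $\nabla u\in L^p(dm_x(y)d\nu(x))$ and $w(x)=\int_X|\nabla u(x,y)|^{p-2}\nabla u(x,y)\,dm_x(y)$. The operator $A=-\Delta_1^{m^1}-\mu\Delta_p^{m^2}$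 on $H$: $(u,v)\in A$ iff $u,v\in H$, $v=v_1-\mu w$ with $(u,-v_1)\in\Delta_1^{m^1}$ (w.r.t. $\nu_1$) and $(u,w)\in\Delta_p^{m^2}$ (w.r.t. $\nu_2$). A strong solution of $u_t+Au\ni 0$, $u(0)=u_0$, on $[0,\infty)$ is $u\in C([0,\infty);H)\cap W^{1,2}_{\rm loc}(0,\infty;H)$ with $u(0)=u_0$ and $-u_t(t)\in A(u(t))$ for a.e. $t$; it exists and is unique. *)

theory Defs
  imports "HOL-Probability.Probability"
begin

definition random_walk :: "'a measure \<Rightarrow> ('a \<Rightarrow> 'a measure) \<Rightarrow> bool" where
  "random_walk M m \<longleftrightarrow>
     (\<forall>x\<in>space M. prob_space (m x) \<and> sets (m x) = sets M) \<and>
     (\<forall>A\<in>sets M. (\<lambda>x. emeasure (m x) A) \<in> borel_measurable M)"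

definition countably_generated :: "'a measure \<Rightarrow> bool" where
  "countably_generated M \<longleftrightarrow> (\<exists>G. countable G \<and> G \<subseteq> Pow (space M) \<and> sets M = sigma_sets (space M) G)"

definition random_walk_space :: "'a measure \<Rightarrow> ('a \<Rightarrow> 'a measure) \<Rightarrow> 'a measure \<Rightarrow> bool" where
  "random_walk_space M m \<nu> \<longleftrightarrow>
     countably_generated M \<and> random_walk M m \<and>
     sets \<nu> = sets M \<and> sigma_finite_measure \<nu> \<and>
     (\<forall>A\<in>sets M. emeasure \<nu> A = (\<integral>\<^sup>+x. emeasure (m x) A \<partial>\<nu>))"

text \<open>Reversibility: the measure dm_x(y) d nu(x) on X x X is invariant under (x,y) -> (y,x),
  expressed through integrals of nonnegative measurable functions.\<close>
definition reversible :: "'a measure \<Rightarrow> ('a \<Rightarrow> 'a measure) \<Rightarrow> 'a measure \<Rightarrow> bool" where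
  "reversible M m \<nu> \<longleftrightarrow>
     (\<forall>f \<in> borel_measurable (M \<Otimes>\<^sub>M M).
        (\<integral>\<^sup>+x. (\<integral>\<^sup>+y. f (x, y) \<partial>m x) \<partial>\<nu>) = (\<integral>\<^sup>+x. (\<integral>\<^sup>+y. f (y, x) \<partial>m x) \<partial>\<nu>))"

definition reversible_random_walk_space :: "'a measure \<Rightarrow> ('a \<Rightarrow> 'a measure) \<Rightarrow> 'a measure \<Rightarrow> bool" where
  "reversible_random_walk_space M m \<nu> \<longleftrightarrow> random_walk_space M m \<nu> \<and> reversible M m \<nu>"

definition nl_grad :: "('a \<Rightarrow> real) \<Rightarrow> 'a \<Rightarrow> 'a \<Rightarrow> real" where
  "nl_grad u x y = u y - u x"

definition L2 :: "'a measure \<Rightarrow> ('a \<Rightarrow> real) \<Rightarrow> bool" where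
  "L2 \<nu> f \<longleftrightarrow> f \<in> borel_measurable \<nu> \<and> integrable \<nu> (\<lambda>x. (f x)\<^sup>2)"

definition F1 :: "('a \<Rightarrow> 'a measure) \<Rightarrow> 'a measure \<Rightarrow> ('a \<Rightarrow> real) \<Rightarrow> ennreal" where
  "F1 m \<nu> u = ennreal (1/2) * (\<integral>\<^sup>+x. (\<integral>\<^sup>+y. ennreal \<bar>nl_grad u x y\<bar> \<partial>m x) \<partial>\<nu>)"

definition subdiff_L2 :: "'a measure \<Rightarrow> (('a \<Rightarrow> real) \<Rightarrow> ennreal) \<Rightarrow> ('a \<Rightarrow> real) \<Rightarrow> ('a \<Rightarrow> real) \<Rightarrow> bool" where
  "subdiff_L2 \<nu> F u v \<longleftrightarrow> L2 \<nu> u \<and> L2 \<nu> v \<and> F u < \<infinity> \<and>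
     (\<forall>w. L2 \<nu> w \<longrightarrow>
        enn2ereal (F w) \<ge> enn2ereal (F u) + ereal (\<integral>x. v x * (w x - u x) \<partial>\<nu>))"

definition Delta1 :: "('a \<Rightarrow> 'a measure) \<Rightarrow> 'a measure \<Rightarrow> ('a \<Rightarrow> real) \<Rightarrow> ('a \<Rightarrow> real) \<Rightarrow> bool" where
  "Delta1 m \<nu> u v \<longleftrightarrow> subdiff_L2 \<nu> (F1 m \<nu>) u (\<lambda>x. - v x)"

definition Deltap :: "real \<Rightarrow> ('a \<Rightarrow> 'a measure) \<Rightarrow> 'a measure \<Rightarrow> ('a \<Rightarrow> real) \<Rightarrow> ('a \<Rightarrow> real) \<Rightarrow> bool" where
  "Deltap p m \<nu> u w \<longleftrightarrow> L2 \<nu> u \<and> L2 \<nu> w \<and>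
     (\<integral>\<^sup>+x. (\<integral>\<^sup>+y. ennreal (\<bar>nl_grad u x y\<bar> powr p) \<partial>m x) \<partial>\<nu>) < \<infinity> \<and>
     (AE x in \<nu>. w x = (\<integral>y. \<bar>nl_grad u x y\<bar> powr (p - 2) * nl_grad u x y \<partial>m x))"

text \<open>The operator A = -Delta_1^{m1} - mu Delta_p^{m2} on H = L^2(X,nu1):
  (u,v) \<in> A iff v = v1 - mu w with (u,-v1) \<in> Delta_1^{m1} (w.r.t. nu1), (u,w) \<in> Delta_p^{m2} (w.r.t. nu2).\<close>
definition opA :: "real \<Rightarrow> ('a \<Rightarrow> 'a measure) \<Rightarrow> 'a measure \<Rightarrow> ('a \<Rightarrow> 'a measure) \<Rightarrow> 'a measure \<Rightarrow>
    ('a \<Rightarrow> real) \<Rightarrow> ('a \<Rightarrow> real) \<Rightarrow> ('a \<Rightarrow> real) \<Rightarrow> bool" where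
  "opA p m1 \<nu>1 m2 \<nu>2 \<mu> u v \<longleftrightarrow> L2 \<nu>1 u \<and> L2 \<nu>1 v \<and>
     (\<exists>v1 w. Delta1 m1 \<nu>1 u (\<lambda>x. - v1 x) \<and> Deltap p m2 \<nu>2 u w \<and>
        (AE x in \<nu>1. v x = v1 x - \<mu> x * w x))"

text \<open>Strong solution of u_t + A u \<ni> 0, u(0) = u0 on [0,\<infinity>), with values in H = L^2(X,nu1):
  u \<in> C([0,\<infinity>);H), u \<in> W^{1,2}_loc(0,\<infinity>;H) with weak derivative g (u(t) - u(s) = int_s^t g,
  g \<in> L^2(a,b;H) for 0 < a < b), u(0) = u0 and -u_t(t) \<in> A(u(t)) for a.e. t > 0.
  The H-valued maps are represented by jointly measurable functions of (t,x).\<close>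
definition strong_solution :: "(('a \<Rightarrow> real) \<Rightarrow> ('a \<Rightarrow> real) \<Rightarrow> bool) \<Rightarrow> 'a measure \<Rightarrow>
    ('a \<Rightarrow> real) \<Rightarrow> (real \<Rightarrow> 'a \<Rightarrow> real) \<Rightarrow> bool" where
  "strong_solution A \<nu> u0 u \<longleftrightarrow>
     (\<forall>t\<ge>0. L2 \<nu> (u t)) \<and>
     (AE x in \<nu>. u 0 x = u0 x) \<and>
     (\<forall>t\<ge>0. ((\<lambda>s. \<integral>x. (u s x - u t x)\<^sup>2 \<partial>\<nu>) \<longlongrightarrow> 0) (at t within {0..})) \<and>
     (\<exists>g :: real \<Rightarrow> 'a \<Rightarrow> real.
        (\<lambda>(t, x). g t x) \<in> borel_measurable (lborel \<Otimes>\<^sub>M \<nu>) \<and>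
        (\<forall>a b. 0 < a \<longrightarrow> a \<le> b \<longrightarrow>
           (\<integral>\<^sup>+t. indicator {a..b} t * (\<integral>\<^sup>+x. ennreal ((g t x)\<^sup>2) \<partial>\<nu>) \<partial>lborel) < \<infinity>) \<and>
        (\<forall>s t. 0 < s \<longrightarrow> s \<le> t \<longrightarrow>
           (AE x in \<nu>. u t x - u s x = (\<integral>\<tau>. indicator {s..t} \<tau> * g \<tau> x \<partial>lborel))) \<and>
        (AE t in lborel. 0 < t \<longrightarrow> A (u t) (\<lambda>x. - g t x)))"

end

theory Submission
  imports Defs
begin

text \<open>The range of the operator consists of functions with \<open>\<nu>\<^sub>1\<close>-mean zero. For
  \<open>(u, v) \<in> \<Delta>\<^sub>1\<close>, \<open>-v\<close> is a subgradient of \<open>F\<^sub>1\<close>, which does not change when a constant is added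
  to \<open>u\<close>; testing the subgradient inequality with \<open>u \<plusminus> 1\<close> forces \<open>\<integral> v = 0\<close>. For \<open>(u, w) \<in> \<Delta>\<^sub>p\<close>,
  \<open>\<integral> \<mu> w d\<nu>\<^sub>1 = \<integral> w d\<nu>\<^sub>2\<close> is the integral of an antisymmetric kernel against the reversible
  measure \<open>dm\<^sup>2\<^sub>x(y) d\<nu>\<^sub>2(x)\<close>, hence zero. By Fubini applied to the weak derivative, \<open>\<integral> u(t) d\<nu>\<^sub>1\<close>
  is therefore constant for \<open>t > 0\<close>, and since \<open>\<nu>\<^sub>1\<close> is finite, continuity of \<open>u\<close> in
  \<open>L\<^sup>2(\<nu>\<^sub>1)\<close> at \<open>t = 0\<close> passes the constant on to \<open>u\<^sub>0\<close>.\<close>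

lemma (in finite_measure) L2_integrable:
  assumes "L2 M f"
  shows "integrable M f"
  using assms square_integrable_imp_integrable unfolding L2_def by blast

lemma L2_diff:
  assumes "L2 M f" "L2 M g"
  shows "L2 M (\<lambda>x. f x - g x)"
proof -
  have [measurable]: "f \<in> borel_measurable M" "g \<in> borel_measurable M"
    using assms unfolding L2_def by auto
  have "integrable M (\<lambda>x. (f x - g x)\<^sup>2)"
  proof (rule Bochner_Integration.integrable_bound)
    show "integrable M (\<lambda>x. 2 * (f x)\<^sup>2 + 2 * (g x)\<^sup>2)"
      using assms unfolding L2_def by simp
    have "(f x - g x)\<^sup>2 \<le> 2 * (f x)\<^sup>2 + 2 * (g x)\<^sup>2" for x
      using zero_le_power2[of "f x + g x"] by (simp add: power2_eq_square algebra_simps)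
    then show "AE x in M. norm ((f x - g x)\<^sup>2) \<le> norm (2 * (f x)\<^sup>2 + 2 * (g x)\<^sup>2)"
      by (intro AE_I2) simp
  qed measurable
  then show ?thesis
    unfolding L2_def by simp
qed

lemma (in finite_measure) L2_add_const:
  assumes "L2 M f"
  shows "L2 M (\<lambda>x. f x + a)"
  using L2_diff[OF assms, of "\<lambda>_. - a"] by (simp add: L2_def)

lemma (in finite_measure) square_integral_le:
  fixes f :: "'a \<Rightarrow> real"
  assumes "integrable M f" "integrable M (\<lambda>x. (f x)\<^sup>2)"
  shows "(\<integral>x. f x \<partial>M)\<^sup>2 \<le> measure M (space M) * (\<integral>x. (f x)\<^sup>2 \<partial>M)"
proof (cases "measure M (space M) = 0")
  case True
  then have "AE x in M. f x = 0"
    by (intro AE_I'[of "space M"]) (auto simp: emeasure_eq_measure)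
  then show ?thesis
    using True by (simp add: integral_eq_zero_AE)
next
  case False
  define V where "V = measure M (space M)"
  define I where "I = (\<integral>x. f x \<partial>M)"
  have "V > 0"
    using False unfolding V_def by (simp add: zero_less_measure_iff)
  have "0 \<le> (\<integral>x. (f x - I / V)\<^sup>2 \<partial>M)"
    by simp
  also have "\<dots> = (\<integral>x. (f x)\<^sup>2 \<partial>M) - I\<^sup>2 / V"
    using assms \<open>V > 0\<close> unfolding I_def V_def
    by (simp add: power2_eq_square algebra_simps)
  finally show ?thesis
    using \<open>V > 0\<close> by (simp add: I_def V_def field_simps)
qed

lemma (in finite_measure) tendsto_integral_if_L2_tendsto:
  fixes f :: "'b \<Rightarrow> 'a \<Rightarrow> real"
  assumes "\<forall>\<^sub>F s in F. L2 M (f s)" "L2 M g"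
    and "((\<lambda>s. \<integral>x. (f s x - g x)\<^sup>2 \<partial>M) \<longlongrightarrow> 0) F"
  shows "((\<lambda>s. \<integral>x. f s x \<partial>M) \<longlongrightarrow> (\<integral>x. g x \<partial>M)) F"
proof -
  have bound: "\<forall>\<^sub>F s in F. \<bar>(\<integral>x. f s x \<partial>M) - (\<integral>x. g x \<partial>M)\<bar>
      \<le> sqrt (measure M (space M) * (\<integral>x. (f s x - g x)\<^sup>2 \<partial>M))"
    using assms(1)
  proof eventually_elim
    case (elim s)
    have "L2 M (\<lambda>x. f s x - g x)"
      using elim assms(2) by (rule L2_diff)
    moreover have "(\<integral>x. f s x \<partial>M) - (\<integral>x. g x \<partial>M) = (\<integral>x. f s x - g x \<partial>M)"
      using elim assms(2) by (simp add: L2_integrable)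
    ultimately show ?case
      using square_integral_le[of "\<lambda>x. f s x - g x"]
      by (auto simp: L2_def L2_integrable intro!: real_le_rsqrt)
  qed
  have lim: "((\<lambda>s. sqrt (measure M (space M) * (\<integral>x. (f s x - g x)\<^sup>2 \<partial>M))) \<longlongrightarrow> 0) F"
    using tendsto_real_sqrt[OF tendsto_mult_right_zero[OF assms(3)]] by simp
  have "((\<lambda>s. \<bar>(\<integral>x. f s x \<partial>M) - (\<integral>x. g x \<partial>M)\<bar>) \<longlongrightarrow> 0) F"
    by (rule tendsto_sandwich[OF _ bound tendsto_const lim]) simp
  then show ?thesis
    by (simp add: tendsto_rabs_zero_iff LIM_zero_iff)
qed

lemma random_walk_kernel_measurable:
  assumes "random_walk M m"
  shows "m \<in> measurable M (subprob_algebra M)"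
  using assms unfolding random_walk_def
  by (intro measurable_subprob_algebra) (auto intro: prob_space_imp_subprob_space)

lemma random_walk_integral_measurable:
  fixes f :: "'a \<Rightarrow> 'a \<Rightarrow> real"
  assumes rw: "random_walk M m" and f: "(\<lambda>(x, y). f x y) \<in> borel_measurable (M \<Otimes>\<^sub>M M)"
  shows "(\<lambda>x. \<integral>y. f x y \<partial>m x) \<in> borel_measurable M"
proof -
  have "(\<lambda>x. distr (m x) (M \<Otimes>\<^sub>M M) (Pair x)) \<in> measurable M (subprob_algebra (M \<Otimes>\<^sub>M M))"
    by (rule measurable_distr2[OF _ random_walk_kernel_measurable[OF rw]])
      (simp only: case_prod_Pair measurable_ident)
  from measurable_compose[OF this integral_measurable_subprob_algebra[OF f]]
  have "(\<lambda>x. \<integral>z. (\<lambda>(x, y). f x y) z \<partial>distr (m x) (M \<Otimes>\<^sub>M M) (Pair x)) \<in> borel_measurable M" .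
  then show ?thesis
  proof (rule measurable_cong[THEN iffD1, rotated])
    fix x assume "x \<in> space M"
    then have "sets (m x) = sets M" using rw unfolding random_walk_def by auto
    then show "(\<integral>z. (\<lambda>(x, y). f x y) z \<partial>distr (m x) (M \<Otimes>\<^sub>M M) (Pair x)) = (\<integral>y. f x y \<partial>m x)"
    proof (subst integral_distr)
      show "Pair x \<in> measurable (m x) (M \<Otimes>\<^sub>M M)"
        by (subst measurable_cong_sets[OF \<open>sets (m x) = sets M\<close> refl])
          (rule measurable_Pair1'[OF \<open>x \<in> space M\<close>])
    qed (use f in simp_all)
  qed
qed

lemma random_walk_nn_integral_measurable:
  assumes "random_walk M m" and "(\<lambda>(x, y). f x y) \<in> borel_measurable (M \<Otimes>\<^sub>M M)"
  shows "(\<lambda>x. \<integral>\<^sup>+y. f x y \<partial>m x) \<in> borel_measurable M"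
  using assms(2) random_walk_kernel_measurable[OF assms(1)]
  by (rule nn_integral_measurable_subprob_algebra2)

lemma integrable_enn2real:
  assumes [measurable]: "F \<in> borel_measurable M" and fin: "(\<integral>\<^sup>+x. F x \<partial>M) < \<infinity>"
  shows "integrable M (\<lambda>x. enn2real (F x))"
proof (rule integrableI_bounded)
  have "(\<integral>\<^sup>+x. ennreal (norm (enn2real (F x))) \<partial>M) \<le> (\<integral>\<^sup>+x. F x \<partial>M)"
    by (intro nn_integral_mono) (simp add: ennreal_enn2real_if)
  then show "(\<integral>\<^sup>+x. ennreal (norm (enn2real (F x))) \<partial>M) < \<infinity>"
    using fin by (rule le_less_trans)
qed measurable

lemma integral_enn2real:
  assumes [measurable]: "F \<in> borel_measurable M" and fin: "(\<integral>\<^sup>+x. F x \<partial>M) < \<infinity>"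
  shows "(\<integral>x. enn2real (F x) \<partial>M) = enn2real (\<integral>\<^sup>+x. F x \<partial>M)"
proof -
  have "AE x in M. F x \<noteq> \<infinity>"
    using fin by (intro nn_integral_PInf_AE) auto
  then have "AE x in M. ennreal (enn2real (F x)) = F x"
    by eventually_elim (simp add: ennreal_enn2real_if less_top)
  then show ?thesis
    by (simp add: integral_eq_nn_integral cong: nn_integral_cong_AE)
qed

lemma reversible_nn_integral_antisymmetric:
  fixes \<phi> :: "'a \<Rightarrow> 'a \<Rightarrow> real"
  assumes rev: "reversible M m \<nu>"
    and [measurable]: "(\<lambda>(x, y). \<phi> x y) \<in> borel_measurable (M \<Otimes>\<^sub>M M)"
    and anti: "\<And>x y. \<phi> y x = - \<phi> x y"
  shows "(\<integral>\<^sup>+x. (\<integral>\<^sup>+y. ennreal (\<phi> x y) \<partial>m x) \<partial>\<nu>) = (\<integral>\<^sup>+x. (\<integral>\<^sup>+y. ennreal (- \<phi> x y) \<partial>m x) \<partial>\<nu>)"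
proof -
  have "(\<lambda>(x, y). ennreal (\<phi> x y)) \<in> borel_measurable (M \<Otimes>\<^sub>M M)"
    by measurable
  then have "(\<integral>\<^sup>+x. (\<integral>\<^sup>+y. (\<lambda>(x, y). ennreal (\<phi> x y)) (x, y) \<partial>m x) \<partial>\<nu>)
      = (\<integral>\<^sup>+x. (\<integral>\<^sup>+y. (\<lambda>(x, y). ennreal (\<phi> x y)) (y, x) \<partial>m x) \<partial>\<nu>)"
    using rev unfolding reversible_def by blast
  then have "(\<integral>\<^sup>+x. (\<integral>\<^sup>+y. ennreal (\<phi> x y) \<partial>m x) \<partial>\<nu>) = (\<integral>\<^sup>+x. (\<integral>\<^sup>+y. ennreal (\<phi> y x) \<partial>m x) \<partial>\<nu>)"
    by (simp only: prod.case)
  also have "\<dots> = (\<integral>\<^sup>+x. (\<integral>\<^sup>+y. ennreal (- \<phi> x y) \<partial>m x) \<partial>\<nu>)"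
    by (intro nn_integral_cong arg_cong[where f = ennreal] anti)
  finally show ?thesis .
qed

lemma reversible_integral_antisymmetric_eq_0:
  fixes \<phi> :: "'a \<Rightarrow> 'a \<Rightarrow> real"
  assumes rw: "reversible_random_walk_space M m \<nu>"
    and \<phi>_meas[measurable]: "(\<lambda>(x, y). \<phi> x y) \<in> borel_measurable (M \<Otimes>\<^sub>M M)"
    and anti: "\<And>x y. \<phi> y x = - \<phi> x y"
    and fin: "(\<integral>\<^sup>+x. (\<integral>\<^sup>+y. ennreal \<bar>\<phi> x y\<bar> \<partial>m x) \<partial>\<nu>) < \<infinity>"
  shows "(\<integral>x. (\<integral>y. \<phi> x y \<partial>m x) \<partial>\<nu>) = 0"
proof -
  have sets_\<nu>: "sets \<nu> = sets M" and walk: "random_walk M m" and rev: "reversible M m \<nu>"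
    using rw unfolding reversible_random_walk_space_def random_walk_space_def by auto
  define P where "P x = (\<integral>\<^sup>+y. ennreal (\<phi> x y) \<partial>m x)" for x
  define N where "N x = (\<integral>\<^sup>+y. ennreal (- \<phi> x y) \<partial>m x)" for x
  define A where "A x = (\<integral>\<^sup>+y. ennreal \<bar>\<phi> x y\<bar> \<partial>m x)" for x
  have [measurable]: "P \<in> borel_measurable \<nu>" "N \<in> borel_measurable \<nu>" "A \<in> borel_measurable \<nu>"
    "(\<lambda>x. \<integral>y. \<phi> x y \<partial>m x) \<in> borel_measurable \<nu>"
    unfolding P_def N_def A_def measurable_cong_sets[OF sets_\<nu> refl]
    by (intro random_walk_nn_integral_measurable[OF walk] random_walk_integral_measurable[OF walk];
        measurable)+
  have P_eq_N: "(\<integral>\<^sup>+x. P x \<partial>\<nu>) = (\<integral>\<^sup>+x. N x \<partial>\<nu>)"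
    using rev \<phi>_meas anti unfolding P_def N_def by (rule reversible_nn_integral_antisymmetric)
  have A_finite: "AE x in \<nu>. A x \<noteq> \<infinity>"
    using fin[folded A_def] by (intro nn_integral_PInf_AE) auto
  have P_le: "P x \<le> A x" and N_le: "N x \<le> A x" for x
    unfolding P_def N_def A_def by (auto intro!: nn_integral_mono ennreal_leI)
  have P_fin: "(\<integral>\<^sup>+x. P x \<partial>\<nu>) < \<infinity>" and N_fin: "(\<integral>\<^sup>+x. N x \<partial>\<nu>) < \<infinity>"
    using fin[folded A_def] P_le N_le by (auto intro: le_less_trans nn_integral_mono)
  have inner: "AE x in \<nu>. (\<integral>y. \<phi> x y \<partial>m x) = enn2real (P x) - enn2real (N x)"
    using A_finite AE_space
  proof eventually_elim
    case (elim x)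
    then have x: "x \<in> space M"
      using sets_eq_imp_space_eq[OF sets_\<nu>] by simp
    then have "sets (m x) = sets M"
      using walk unfolding random_walk_def by auto
    then have "\<phi> x \<in> borel_measurable (m x)"
      by (subst measurable_cong_sets[OF \<open>sets (m x) = sets M\<close> refl]) (use x in measurable)
    moreover have "(\<integral>\<^sup>+y. ennreal (norm (\<phi> x y)) \<partial>m x) < \<infinity>"
      using elim unfolding A_def by (simp add: less_top)
    ultimately have "integrable (m x) (\<phi> x)"
      by (rule integrableI_bounded)
    then show ?case
      unfolding P_def N_def by (rule real_lebesgue_integral_def)
  qed
  have "(\<integral>x. (\<integral>y. \<phi> x y \<partial>m x) \<partial>\<nu>) = (\<integral>x. enn2real (P x) - enn2real (N x) \<partial>\<nu>)"
    using inner by (intro integral_cong_AE) auto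
  also have "\<dots> = enn2real (\<integral>\<^sup>+x. P x \<partial>\<nu>) - enn2real (\<integral>\<^sup>+x. N x \<partial>\<nu>)"
    using P_fin N_fin by (simp add: integrable_enn2real integral_enn2real)
  finally show ?thesis
    using P_eq_N by simp
qed

lemma subdiff_L2_integral_eq_0:
  assumes "finite_measure \<nu>"
    and shift_invariant: "\<And>a. F (\<lambda>x. u x + a) = F u"
    and "subdiff_L2 \<nu> F u v"
  shows "(\<integral>x. v x \<partial>\<nu>) = 0"
proof -
  interpret finite_measure \<nu> by fact
  have u: "L2 \<nu> u" and "F u < \<infinity>"
    and subgradient: "\<And>w. L2 \<nu> w \<Longrightarrow>
      enn2ereal (F w) \<ge> enn2ereal (F u) + ereal (\<integral>x. v x * (w x - u x) \<partial>\<nu>)"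
    using assms(3) unfolding subdiff_L2_def by auto
  then obtain r where r: "enn2ereal (F u) = ereal r"
    by (cases "F u") (auto simp: ennreal_less_top)
  have "(\<integral>x. v x * a \<partial>\<nu>) \<le> 0" for a
    using subgradient[OF L2_add_const[OF u, of a]] shift_invariant r by simp
  from this[of 1] this[of "-1"] show ?thesis
    by simp
qed

lemma F1_add_const: "F1 m \<nu> (\<lambda>x. u x + a) = F1 m \<nu> u"
  by (simp add: F1_def nl_grad_def)

lemma Delta1_integral_eq_0:
  assumes "finite_measure \<nu>" "Delta1 m \<nu> u v"
  shows "(\<integral>x. v x \<partial>\<nu>) = 0"
proof -
  have "(\<integral>x. - v x \<partial>\<nu>) = 0"
    using assms(2) unfolding Delta1_def
    by (rule subdiff_L2_integral_eq_0[where F = "F1 m \<nu>" and u = u, OF assms(1) F1_add_const])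
  then show ?thesis
    by simp
qed

lemma abs_powr_minus_2_mult_le:
  fixes g p :: real
  assumes "p > 1"
  shows "\<bar>\<bar>g\<bar> powr (p - 2) * g\<bar> \<le> 1 + \<bar>g\<bar> powr p"
proof (cases "g = 0")
  case False
  have "\<bar>\<bar>g\<bar> powr (p - 2) * g\<bar> = \<bar>g\<bar> powr (p - 1)"
    using False powr_mult_base[of "\<bar>g\<bar>" "p - 2"] by (simp add: abs_mult mult.commute)
  also have "\<dots> \<le> 1 + \<bar>g\<bar> powr p"
  proof (cases "\<bar>g\<bar> \<le> 1")
    case True
    then have "\<bar>g\<bar> powr (p - 1) \<le> 1"
      using assms by (intro powr_le1) auto
    then show ?thesis
      by (simp add: add_increasing2)
  next
    case False
    then have "\<bar>g\<bar> powr (p - 1) \<le> \<bar>g\<bar> powr p"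
      by (intro powr_mono) auto
    then show ?thesis
      by simp
  qed
  finally show ?thesis .
qed simp

lemma (in finite_measure) nn_integral_abs_powr_minus_2_mult_finite:
  fixes h :: "'a \<Rightarrow> 'a \<Rightarrow> real"
  assumes "p > 1" and rws: "random_walk_space M' m M"
    and [measurable]: "(\<lambda>(x, y). h x y) \<in> borel_measurable (M' \<Otimes>\<^sub>M M')"
    and "(\<integral>\<^sup>+x. (\<integral>\<^sup>+y. ennreal (\<bar>h x y\<bar> powr p) \<partial>m x) \<partial>M) < \<infinity>"
  shows "(\<integral>\<^sup>+x. (\<integral>\<^sup>+y. ennreal \<bar>\<bar>h x y\<bar> powr (p - 2) * h x y\<bar> \<partial>m x) \<partial>M) < \<infinity>"
proof -
  have sets_M: "sets M = sets M'" and walk: "random_walk M' m"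
    using rws unfolding random_walk_space_def by auto
  define G where "G x = (\<integral>\<^sup>+y. ennreal (\<bar>h x y\<bar> powr p) \<partial>m x)" for x
  have [measurable]: "G \<in> borel_measurable M"
    unfolding G_def measurable_cong_sets[OF sets_M refl]
    by (rule random_walk_nn_integral_measurable[OF walk]) measurable
  have "(\<integral>\<^sup>+y. ennreal \<bar>\<bar>h x y\<bar> powr (p - 2) * h x y\<bar> \<partial>m x) \<le> 1 + G x" if "x \<in> space M" for x
  proof -
    have "x \<in> space M'"
      using that sets_eq_imp_space_eq[OF sets_M] by simp
    then have "prob_space (m x)" and sets_mx: "sets (m x) = sets M'"
      using walk unfolding random_walk_def by auto
    have "(\<integral>\<^sup>+y. ennreal \<bar>\<bar>h x y\<bar> powr (p - 2) * h x y\<bar> \<partial>m x)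
        \<le> (\<integral>\<^sup>+y. 1 + ennreal (\<bar>h x y\<bar> powr p) \<partial>m x)"
      by (intro nn_integral_mono order_trans[OF ennreal_leI[OF abs_powr_minus_2_mult_le[OF assms(1)]]])
        (simp add: ennreal_plus)
    also have "\<dots> = emeasure (m x) (space (m x)) + G x"
      unfolding G_def using \<open>x \<in> space M'\<close>
      by (subst nn_integral_add) (simp_all add: measurable_cong_sets[OF sets_mx refl])
    also have "emeasure (m x) (space (m x)) = 1"
      using \<open>prob_space (m x)\<close> by (rule prob_space.emeasure_space_1)
    finally show ?thesis .
  qed
  then have "(\<integral>\<^sup>+x. (\<integral>\<^sup>+y. ennreal \<bar>\<bar>h x y\<bar> powr (p - 2) * h x y\<bar> \<partial>m x) \<partial>M) \<le> (\<integral>\<^sup>+x. 1 + G x \<partial>M)"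
    by (rule nn_integral_mono)
  also have "\<dots> = emeasure M (space M) + (\<integral>\<^sup>+x. G x \<partial>M)"
    by (subst nn_integral_add) auto
  also have "\<dots> < \<infinity>"
    using assms(4) unfolding G_def by (simp add: less_top[symmetric])
  finally show ?thesis .
qed

lemma Deltap_integral_eq_0:
  assumes "p > 1" and rw: "reversible_random_walk_space M m \<nu>" and "finite_measure \<nu>"
    and "Deltap p m \<nu> u w"
  shows "(\<integral>x. w x \<partial>\<nu>) = 0"
proof -
  interpret finite_measure \<nu> by fact
  have random_walk_space: "random_walk_space M m \<nu>"
    using rw unfolding reversible_random_walk_space_def by simp
  then have sets_\<nu>: "sets \<nu> = sets M" and walk: "random_walk M m"
    unfolding random_walk_space_def by auto
  have "L2 \<nu> u" "L2 \<nu> w"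
    and gradient_p: "(\<integral>\<^sup>+x. (\<integral>\<^sup>+y. ennreal (\<bar>nl_grad u x y\<bar> powr p) \<partial>m x) \<partial>\<nu>) < \<infinity>"
    and w_eq: "AE x in \<nu>. w x = (\<integral>y. \<bar>nl_grad u x y\<bar> powr (p - 2) * nl_grad u x y \<partial>m x)"
    using assms(4) unfolding Deltap_def by auto
  then have [measurable]: "u \<in> borel_measurable M" "w \<in> borel_measurable \<nu>"
    unfolding L2_def measurable_cong_sets[OF sets_\<nu> refl] by auto
  define \<phi> where "\<phi> x y = \<bar>nl_grad u x y\<bar> powr (p - 2) * nl_grad u x y" for x y
  have \<phi>_meas[measurable]: "(\<lambda>(x, y). \<phi> x y) \<in> borel_measurable (M \<Otimes>\<^sub>M M)"
    unfolding \<phi>_def nl_grad_def by measurable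
  have "(\<lambda>(x, y). nl_grad u x y) \<in> borel_measurable (M \<Otimes>\<^sub>M M)"
    unfolding nl_grad_def by measurable
  then have \<phi>_integrable: "(\<integral>\<^sup>+x. (\<integral>\<^sup>+y. ennreal \<bar>\<phi> x y\<bar> \<partial>m x) \<partial>\<nu>) < \<infinity>"
    unfolding \<phi>_def
    by (rule nn_integral_abs_powr_minus_2_mult_finite[OF assms(1) random_walk_space _ gradient_p])
  have [measurable]: "(\<lambda>x. \<integral>y. \<phi> x y \<partial>m x) \<in> borel_measurable \<nu>"
    unfolding measurable_cong_sets[OF sets_\<nu> refl] by (rule random_walk_integral_measurable[OF walk \<phi>_meas])
  have "(\<integral>x. w x \<partial>\<nu>) = (\<integral>x. (\<integral>y. \<phi> x y \<partial>m x) \<partial>\<nu>)"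
    using w_eq[folded \<phi>_def] by (intro integral_cong_AE) auto
  also have "\<dots> = 0"
    using rw \<phi>_meas _ \<phi>_integrable
    by (rule reversible_integral_antisymmetric_eq_0)
       (simp add: \<phi>_def nl_grad_def abs_minus_commute algebra_simps)
  finally show ?thesis .
qed

lemma (in finite_measure) finite_measure_density_bounded:
  assumes [measurable]: "g \<in> borel_measurable M" and "AE x in M. \<bar>g x\<bar> \<le> K"
  shows "finite_measure (density M (\<lambda>x. ennreal (g x)))"
proof (rule finite_measureI)
  have "emeasure (density M (\<lambda>x. ennreal (g x))) (space M) = (\<integral>\<^sup>+x. ennreal (g x) * indicator (space M) x \<partial>M)"
    by (subst emeasure_density) auto
  also have "\<dots> \<le> (\<integral>\<^sup>+x. ennreal K \<partial>M)"
    using assms(2)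
    by (intro nn_integral_mono_AE) (auto elim!: eventually_mono intro!: ennreal_leI simp: indicator_def)
  also have "\<dots> < \<infinity>"
    by (simp add: emeasure_eq_measure ennreal_mult_less_top)
  finally show "emeasure (density M (\<lambda>x. ennreal (g x))) (space (density M (\<lambda>x. ennreal (g x)))) \<noteq> \<infinity>"
    by simp
qed

lemma opA_integral_eq_0:
  assumes "p > 1" and "reversible_random_walk_space M m2 \<nu>2"
    and "finite_measure \<nu>1" "finite_measure \<nu>2"
    and \<nu>2_def: "\<nu>2 = density \<nu>1 (\<lambda>x. ennreal (\<mu> x))"
    and [measurable]: "\<mu> \<in> borel_measurable \<nu>1" and \<mu>_nonneg: "AE x in \<nu>1. 0 \<le> \<mu> x"
    and "opA p m1 \<nu>1 m2 \<nu>2 \<mu> u v"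
  shows "(\<integral>x. v x \<partial>\<nu>1) = 0"
proof -
  interpret \<nu>1: finite_measure \<nu>1 by fact
  interpret \<nu>2: finite_measure \<nu>2 by fact
  obtain v1 w where "L2 \<nu>1 v" and \<Delta>1: "Delta1 m1 \<nu>1 u (\<lambda>x. - v1 x)"
    and \<Delta>p: "Deltap p m2 \<nu>2 u w" and v_eq: "AE x in \<nu>1. v x = v1 x - \<mu> x * w x"
    using assms(8) unfolding opA_def by blast
  have "L2 \<nu>1 v1"
    using \<Delta>1 unfolding Delta1_def subdiff_L2_def by simp
  have "L2 \<nu>2 w"
    using \<Delta>p unfolding Deltap_def by simp
  then have [measurable]: "w \<in> borel_measurable \<nu>1"
    unfolding L2_def \<nu>2_def by simp
  have "integrable \<nu>1 (\<lambda>x. \<mu> x * w x)"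
    using \<nu>2.L2_integrable[OF \<open>L2 \<nu>2 w\<close>] \<mu>_nonneg unfolding \<nu>2_def
    by (subst (asm) integrable_density) auto
  have "(\<integral>x. \<mu> x * w x \<partial>\<nu>1) = (\<integral>x. w x \<partial>\<nu>2)"
    using \<mu>_nonneg unfolding \<nu>2_def by (subst integral_density) auto
  also have "\<dots> = 0"
    using Deltap_integral_eq_0[OF assms(1,2,4) \<Delta>p] .
  finally have "(\<integral>x. \<mu> x * w x \<partial>\<nu>1) = 0" .
  moreover have "(\<integral>x. v1 x \<partial>\<nu>1) = 0"
    using Delta1_integral_eq_0[OF assms(3) \<Delta>1] by simp
  moreover have "(\<integral>x. v x \<partial>\<nu>1) = (\<integral>x. v1 x - \<mu> x * w x \<partial>\<nu>1)"
    using v_eq \<open>L2 \<nu>1 v\<close> \<open>L2 \<nu>1 v1\<close> by (intro integral_cong_AE) (auto simp: L2_def)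
  ultimately show ?thesis
    using \<nu>1.L2_integrable[OF \<open>L2 \<nu>1 v1\<close>] \<open>integrable \<nu>1 (\<lambda>x. \<mu> x * w x)\<close> by simp
qed

lemma abs_le_1_plus_square: "\<bar>y :: real\<bar> \<le> 1 + y\<^sup>2"
  using zero_le_power2[of "\<bar>y\<bar> - 1"] abs_ge_zero[of y]
  by (simp add: power2_eq_square algebra_simps abs_mult_self_eq)

lemma (in finite_measure) integrable_indicator_Icc_mult:
  fixes g :: "real \<Rightarrow> 'a \<Rightarrow> real"
  assumes [measurable]: "(\<lambda>(t, x). g t x) \<in> borel_measurable (lborel \<Otimes>\<^sub>M M)"
    and square_integrable: "(\<integral>\<^sup>+t. indicator {a..b} t * (\<integral>\<^sup>+x. ennreal ((g t x)\<^sup>2) \<partial>M) \<partial>lborel) < \<infinity>"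
  shows "integrable (lborel \<Otimes>\<^sub>M M) (\<lambda>(t, x). indicator {a..b} t * g t x)"
proof (rule integrableI_bounded)
  interpret P: pair_sigma_finite lborel M ..
  have norm_meas: "(\<lambda>z. ennreal (norm (case z of (t, x) \<Rightarrow> indicator {a..b} t * g t x)))
      \<in> borel_measurable (lborel \<Otimes>\<^sub>M M)"
    by measurable
  have "(\<integral>\<^sup>+z. ennreal (norm (case z of (t, x) \<Rightarrow> indicator {a..b} t * g t x)) \<partial>(lborel \<Otimes>\<^sub>M M))
      = (\<integral>\<^sup>+t. (\<integral>\<^sup>+x. ennreal (norm (indicator {a..b} t * g t x)) \<partial>M) \<partial>lborel)"
    by (simp only: nn_integral_fst[OF norm_meas, symmetric] prod.case)
  also have "\<dots> \<le> (\<integral>\<^sup>+t. (\<integral>\<^sup>+x. indicator {a..b} t * (1 + ennreal ((g t x)\<^sup>2)) \<partial>M) \<partial>lborel)"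
  proof (intro nn_integral_mono)
    fix t x
    have "ennreal \<bar>g t x\<bar> \<le> 1 + ennreal ((g t x)\<^sup>2)"
      using ennreal_leI[OF abs_le_1_plus_square[of "g t x"]] by (simp add: ennreal_plus)
    then show "ennreal (norm (indicator {a..b} t * g t x)) \<le> indicator {a..b} t * (1 + ennreal ((g t x)\<^sup>2))"
      by (simp add: indicator_def)
  qed
  also have "\<dots> = (\<integral>\<^sup>+t. indicator {a..b} t * emeasure M (space M)
      + indicator {a..b} t * (\<integral>\<^sup>+x. ennreal ((g t x)\<^sup>2) \<partial>M) \<partial>lborel)"
    by (intro nn_integral_cong) (simp add: nn_integral_cmult nn_integral_add distrib_left)
  also have "\<dots> = emeasure M (space M) * emeasure lborel {a..b}
      + (\<integral>\<^sup>+t. indicator {a..b} t * (\<integral>\<^sup>+x. ennreal ((g t x)\<^sup>2) \<partial>M) \<partial>lborel)"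
    by (subst nn_integral_add) (auto simp: mult.commute[of "indicator _ _"] nn_integral_cmult_indicator)
  also have "\<dots> < \<infinity>"
    using square_integrable by (simp add: emeasure_eq_measure emeasure_lborel_Icc_eq ennreal_mult_less_top)
  finally show "(\<integral>\<^sup>+z. ennreal (norm (case z of (t, x) \<Rightarrow> indicator {a..b} t * g t x)) \<partial>(lborel \<Otimes>\<^sub>M M)) < \<infinity>" .
qed measurable

lemma (in finite_measure) integral_diff_eq_integral_derivative:
  fixes u g :: "real \<Rightarrow> 'a \<Rightarrow> real"
  assumes [measurable]: "(\<lambda>(t, x). g t x) \<in> borel_measurable (lborel \<Otimes>\<^sub>M M)"
    and "(\<integral>\<^sup>+\<tau>. indicator {s..t} \<tau> * (\<integral>\<^sup>+x. ennreal ((g \<tau> x)\<^sup>2) \<partial>M) \<partial>lborel) < \<infinity>"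
    and ftc: "AE x in M. u t x - u s x = (\<integral>\<tau>. indicator {s..t} \<tau> * g \<tau> x \<partial>lborel)"
    and "integrable M (u t)" "integrable M (u s)"
  shows "(\<integral>x. u t x \<partial>M) - (\<integral>x. u s x \<partial>M)
    = (\<integral>\<tau>. indicator {s..t} \<tau> * (\<integral>x. g \<tau> x \<partial>M) \<partial>lborel)"
proof -
  interpret P: pair_sigma_finite lborel M ..
  have integrable: "integrable (lborel \<Otimes>\<^sub>M M) (\<lambda>(\<tau>, x). indicator {s..t} \<tau> * g \<tau> x)"
    using assms(1,2) by (rule integrable_indicator_Icc_mult)
  have "(\<integral>x. u t x \<partial>M) - (\<integral>x. u s x \<partial>M) = (\<integral>x. u t x - u s x \<partial>M)"
    using assms(4,5) by simp
  also have "\<dots> = (\<integral>x. (\<integral>\<tau>. indicator {s..t} \<tau> * g \<tau> x \<partial>lborel) \<partial>M)"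
    using ftc borel_measurable_integrable[OF P.integrable_snd[OF integrable]] assms(4,5)
    by (intro integral_cong_AE) auto
  also have "\<dots> = (\<integral>\<tau>. (\<integral>x. indicator {s..t} \<tau> * g \<tau> x \<partial>M) \<partial>lborel)"
    using integrable by (rule P.Fubini_integral)
  finally show ?thesis
    by simp
qed

lemma eq_at_0_if_constant_on_pos:
  fixes I :: "real \<Rightarrow> 'b :: t2_space"
  assumes "(I \<longlongrightarrow> I 0) (at_right 0)"
    and constant_on_pos: "\<And>s t. 0 < s \<Longrightarrow> s \<le> t \<Longrightarrow> I t = I s"
    and "t \<ge> 0"
  shows "I t = I 0"
proof (cases "t = 0")
  case False
  then have "\<forall>\<^sub>F s in at_right 0. I t = I s"
    using eventually_at_right_real[of 0 t] \<open>t \<ge> 0\<close> by (auto elim!: eventually_mono intro: constant_on_pos)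
  then have "(I \<longlongrightarrow> I t) (at_right 0)"
    by (rule Lim_transform_eventually[OF tendsto_const])
  then show ?thesis
    using assms(1) by (rule tendsto_unique[OF trivial_limit_at_right_real])
qed simp

lemma strong_solution_integral_eq:
  assumes "finite_measure \<nu>"
    and range_mean_zero: "\<And>f h. A f h \<Longrightarrow> (\<integral>x. h x \<partial>\<nu>) = 0"
    and "strong_solution A \<nu> u0 u" and [measurable]: "u0 \<in> borel_measurable \<nu>"
    and "t \<ge> 0"
  shows "(\<integral>x. u t x \<partial>\<nu>) = (\<integral>x. u0 x \<partial>\<nu>)"
proof -
  interpret finite_measure \<nu> by fact
  have L2_u: "\<And>t. t \<ge> 0 \<Longrightarrow> L2 \<nu> (u t)" and "AE x in \<nu>. u 0 x = u0 x"
    and continuous: "((\<lambda>s. \<integral>x. (u s x - u 0 x)\<^sup>2 \<partial>\<nu>) \<longlongrightarrow> 0) (at 0 within {0..})"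
    using assms(3) unfolding strong_solution_def by auto
  obtain g :: "real \<Rightarrow> 'a \<Rightarrow> real" where
    [measurable]: "(\<lambda>(t, x). g t x) \<in> borel_measurable (lborel \<Otimes>\<^sub>M \<nu>)"
    and square_integrable: "\<And>a b. 0 < a \<Longrightarrow> a \<le> b \<Longrightarrow>
      (\<integral>\<^sup>+t. indicator {a..b} t * (\<integral>\<^sup>+x. ennreal ((g t x)\<^sup>2) \<partial>\<nu>) \<partial>lborel) < \<infinity>"
    and ftc: "\<And>s t. 0 < s \<Longrightarrow> s \<le> t \<Longrightarrow>
      (AE x in \<nu>. u t x - u s x = (\<integral>\<tau>. indicator {s..t} \<tau> * g \<tau> x \<partial>lborel))"
    and equation: "AE t in lborel. 0 < t \<longrightarrow> A (u t) (\<lambda>x. - g t x)"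
    using assms(3) unfolding strong_solution_def by blast
  have g_mean_zero: "AE \<tau> in lborel. 0 < \<tau> \<longrightarrow> (\<integral>x. g \<tau> x \<partial>\<nu>) = 0"
    using equation by eventually_elim (auto dest: range_mean_zero)
  then have conserved: "(\<integral>x. u t x \<partial>\<nu>) = (\<integral>x. u s x \<partial>\<nu>)" if "0 < s" "s \<le> t" for s t
  proof -
    have "(\<integral>x. u t x \<partial>\<nu>) - (\<integral>x. u s x \<partial>\<nu>)
        = (\<integral>\<tau>. indicator {s..t} \<tau> * (\<integral>x. g \<tau> x \<partial>\<nu>) \<partial>lborel)"
      using that L2_u[of s] L2_u[of t]
      by (intro integral_diff_eq_integral_derivative square_integrable ftc) (auto simp: L2_integrable)
    also have "\<dots> = 0"
      using g_mean_zero \<open>0 < s\<close>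
      by (intro integral_eq_zero_AE) (auto elim!: eventually_mono simp: indicator_def)
    finally show ?thesis
      by simp
  qed
  have "\<forall>\<^sub>F s in at_right 0. L2 \<nu> (u s)"
    using eventually_at_right_less[of "0 :: real"] by (auto elim!: eventually_mono intro: L2_u)
  then have limit_0: "((\<lambda>s. \<integral>x. u s x \<partial>\<nu>) \<longlongrightarrow> (\<integral>x. u 0 x \<partial>\<nu>)) (at_right 0)"
    using L2_u[of 0] continuous unfolding at_within_Ici_at_right
    by (rule tendsto_integral_if_L2_tendsto) simp
  have "(\<integral>x. u t x \<partial>\<nu>) = (\<integral>x. u 0 x \<partial>\<nu>)"
    using limit_0 conserved \<open>t \<ge> 0\<close> by (rule eq_at_0_if_constant_on_pos)
  also have "\<dots> = (\<integral>x. u0 x \<partial>\<nu>)"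
    using \<open>AE x in \<nu>. u 0 x = u0 x\<close> L2_u[of 0] by (intro integral_cong_AE) (auto simp: L2_def)
  finally show ?thesis .
qed

theorem lemma3p3:
  fixes M :: "'a measure"
    and m1 m2 :: "'a \<Rightarrow> 'a measure"
    and \<nu>1 \<nu>2 :: "'a measure"
    and \<mu> :: "'a \<Rightarrow> real"
    and p c :: real
    and u0 :: "'a \<Rightarrow> real"
    and u :: "real \<Rightarrow> 'a \<Rightarrow> real"
  assumes "p > 1"
    and "reversible_random_walk_space M m1 \<nu>1"
    and "reversible_random_walk_space M m2 \<nu>2"
    and "\<mu> \<in> borel_measurable M"
    and "\<nu>2 = density \<nu>1 (\<lambda>x. ennreal (\<mu> x))"
    and "\<exists>K. AE x in \<nu>1. \<bar>\<mu> x\<bar> \<le> K"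
    and "c > 0" and "AE x in \<nu>1. \<mu> x \<ge> c"
    and "emeasure \<nu>1 (space \<nu>1) < \<infinity>"
    and "L2 \<nu>1 u0"
    and "strong_solution (opA p m1 \<nu>1 m2 \<nu>2 \<mu>) \<nu>1 u0 u"
  shows "\<forall>t\<ge>0. (\<integral>x. u t x \<partial>\<nu>1) = (\<integral>x. u0 x \<partial>\<nu>1)"
proof -
  have sets_\<nu>1: "sets \<nu>1 = sets M"
    using assms(2) unfolding reversible_random_walk_space_def random_walk_space_def by auto
  have finite_\<nu>1: "finite_measure \<nu>1"
    using assms(9) by (intro finite_measureI) simp
  then interpret \<nu>1: finite_measure \<nu>1 .
  have [measurable]: "\<mu> \<in> borel_measurable \<nu>1"
    using assms(4) unfolding measurable_cong_sets[OF sets_\<nu>1 refl] .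
  have \<mu>_nonneg: "AE x in \<nu>1. 0 \<le> \<mu> x"
    using assms(7,8) by (auto elim!: eventually_mono)
  have finite_\<nu>2: "finite_measure \<nu>2"
    using assms(6) unfolding assms(5) by (auto intro: \<nu>1.finite_measure_density_bounded)
  have "(\<integral>x. h x \<partial>\<nu>1) = 0" if "opA p m1 \<nu>1 m2 \<nu>2 \<mu> f h" for f h
    using assms(1,3) finite_\<nu>1 finite_\<nu>2 assms(5) _ \<mu>_nonneg that
    by (rule opA_integral_eq_0) measurable
  moreover have "u0 \<in> borel_measurable \<nu>1"
    using assms(10) unfolding L2_def by simp
  ultimately show ?thesis
    using strong_solution_integral_eq[OF finite_\<nu>1 _ assms(11)] by blast
qed

end
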